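(* Let $M=p_i^{n_i}p_j^{n_j}p_k^{n_k}$ with distinct primes and $n_i,n_j,n_k\in\mathbb{N}$, let $A\oplus B=\mathbb{Z}_M$ with $\Phi_M(X)\mid A(X)$, assume $A$ is fibered on $D$-grids where $D=M/(p_ip_jp_k)$, and let $\Lambda=\Lambda(z_0,D)$ for some $z_0\in\mathbb{Z}_M$. Let $z_\nu=z_0+\nu M/p_k$ for $\nu=0,\dots,p_k-1$. Assume that $\kappa(a)\in\{i,j\}$ for all $a\in\Sigma_A(\Lambda)$, and that for each $\nu$ there is $\lambda(\nu)\in\{i,j\}$ with $\kappa(a)=\lambda(\nu)$ for all $a\in\Sigma_A(z_\nu*F_i*F_j)$. Assume further that for each $\lambda\in\{i,j\}$, $$\#\{\nu\in\{0,1,\dots,p_k-1\}:\lambda(\nu)=\lambda\}\ge2.$$ Then all fibers $z*F_k$ with $z\in\Lambda$ split with the same parity: either all with parity $(A,B)$ or all with parity $(B,A)$.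
   Context: $A\oplus B=\mathbb{Z}_M$ means every element of $\mathbb{Z}_M$ is uniquely $a+b$, $a\in A$, $b\in B$; $A(X)=\sum_{a\in A}X^a$ ($A$ in $\{0,\dots,M-1\}$), $\Phi_M$ the $M$-th cyclotomic polynomial. For $d\mid M$, $\Lambda(x,d)=\{x'\in\mathbb{Z}_M:d\mid x-x'\}$. For $\nu\in\{i,j,k\}$, $F_\nu=\{0,M/p_\nu,\dots,(p_\nu-1)M/p_\nu\}$; $x*Y=\{x+y:y\in Y\}$, $X*Y=\{x+y:x\in X,y\in Y\}$. A set $Y$ is fibered in the $p_\nu$ direction if it is a union of sets $y*F_\nu$, $y\in Y$. "$A$ is fibered on $D$-grids" means for every $a\in A$, $A\cap\Lambda(a,D)$ is fibered in some direction $p_\nu$. The function $\kappa:A\to\{i,j,k\}$: for each $D$-grid $\Lambda(x,D)$ meeting $A$, fix one direction $\nu(x)$ in which $A\cap\Lambda(x,D)$ is fibered (chosen arbitrarily if several) and set $\kappa(a)=\nu(x)$ for $a\in A\cap\Lambda(x,D)$. For $Z\subset\mathbb{Z}_M$, $\Sigma_A(Z)=\{a\in A:a+b\in Z\text{ for some }b\in B\}$, $\Sigma_B(Z)=\{b\in B:a+b\in Z\text{ for some }a\in A\}$. A fiber $Z=z*F_k$ splits with parity $(A,B)$ if $p_k^{n_k}\mid a-a'$ for all $a,a'\in\Sigma_A(Z)$ and, for distinct $b,b'\in\Sigma_B(Z)$, $p_k^{n_k-1}\mid b-b'$ but $p_k^{n_k}\nmid b-b'$; parity $(B,A)$ is defined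 with $A,B$ interchanged. *)

theory Defs
  imports "HOL-Analysis.Analysis" "HOL-Computational_Algebra.Polynomial"
begin

text \<open>Z_M is modelled by the naturals {0..<M}; all sums are reduced mod M.\<close>

definition tiling :: "nat \<Rightarrow> nat set \<Rightarrow> nat set \<Rightarrow> bool" where
  "tiling M A B \<longleftrightarrow> A \<subseteq> {0..<M} \<and> B \<subseteq> {0..<M} \<and>
     (\<forall>x<M. \<exists>!p. p \<in> A \<times> B \<and> (fst p + snd p) mod M = x)"

definition mask_poly :: "nat set \<Rightarrow> complex poly" where
  "mask_poly A = (\<Sum>a\<in>A. monom 1 a)"

definition cyclotomic :: "nat \<Rightarrow> complex poly" where
  "cyclotomic M = (\<Prod>k\<in>{k. 1 \<le> k \<and> k \<le> M \<and> coprime k M}.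
       [:- cis (2 * pi * real k / real M), 1:])"

definition Lam :: "nat \<Rightarrow> nat \<Rightarrow> nat \<Rightarrow> nat set" where
  "Lam M x d = {x'. x' < M \<and> int d dvd (int x - int x')}"

definition fib :: "nat \<Rightarrow> nat \<Rightarrow> nat set" where
  "fib M p = {t * (M div p) | t. t < p}"

definition tr :: "nat \<Rightarrow> nat \<Rightarrow> nat set \<Rightarrow> nat set" where
  "tr M x Y = {(x + y) mod M | y. y \<in> Y}"

definition sumset :: "nat \<Rightarrow> nat set \<Rightarrow> nat set \<Rightarrow> nat set" where
  "sumset M X Y = {(x + y) mod M | x y. x \<in> X \<and> y \<in> Y}"

definition fibered :: "nat \<Rightarrow> nat set \<Rightarrow> nat \<Rightarrow> bool" where
  "fibered M Y p \<longleftrightarrow> Y = (\<Union>y\<in>Y. tr M y (fib M p))"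

definition Sig :: "nat \<Rightarrow> nat set \<Rightarrow> nat set \<Rightarrow> nat set \<Rightarrow> nat set" where
  "Sig M A B Z = {a \<in> A. \<exists>b\<in>B. (a + b) mod M \<in> Z}"

definition splits :: "nat \<Rightarrow> nat set \<Rightarrow> nat set \<Rightarrow> nat \<Rightarrow> nat \<Rightarrow> nat set \<Rightarrow> bool" where
  "splits M A B p n Z \<longleftrightarrow>
     (\<forall>a\<in>Sig M A B Z. \<forall>a'\<in>Sig M A B Z. int (p ^ n) dvd (int a - int a')) \<and>
     (\<forall>b\<in>Sig M B A Z. \<forall>b'\<in>Sig M B A Z. b \<noteq> b' \<longrightarrow>
        int (p ^ (n - 1)) dvd (int b - int b') \<and> \<not> int (p ^ n) dvd (int b - int b'))"

end

(*
  On a fiber z * F_k, write z + t M/p_k = a_t + b_t with a_t in A and b_t in B. For t <> t'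
  the two points differ by (t - t') M/p_k, of p_k-adic valuation n_k - 1, so by Sands' theorem
  (obtained from Tijdeman's dilation theorem) exactly one of a_t - a_t', b_t - b_t' is divisible
  by p_k^n_k, and both are divisible by p_k^(n_k - 1). Hence either all a_t or all b_t agree
  modulo p_k^n_k: every fiber splits, with parity (A,B) exactly when the a_t agree.

  Write the points of Lambda as z_0 + x M/p_i + y M/p_j + v M/p_k. Increasing x by one moves,
  in a plane v with lambda(v) = i, the A-component by M/p_i and leaves the B-component fixed,
  since A is fibered in direction p_i on that D-grid. As p_k^n_k divides M/p_i, the congruence
  between the A-components in two such planes, which decides the parity of the fiber, does not
  change. Two planes for each of the directions i and j thus carry the parity over all of Lambda.
*)

theory Submission
  imports Defs
begin

section \<open>Dilations of a tiling\<close>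

text \<open>The coefficient of \<open>X\<^sup>x\<close> in \<open>R mod (X\<^sup>M - 1)\<close>.\<close>
definition cyclic_coeff :: "nat \<Rightarrow> int poly \<Rightarrow> nat \<Rightarrow> int" where
  "cyclic_coeff M R x = (\<Sum>k\<le>degree R. if k mod M = x then coeff R k else 0)"

lemma cyclic_coeff_eq_sum_atMost:
  assumes "degree R \<le> n"
  shows "cyclic_coeff M R x = (\<Sum>k\<le>n. if k mod M = x then coeff R k else 0)"
  unfolding cyclic_coeff_def
  by (rule sum.mono_neutral_left) (use assms in \<open>auto simp: coeff_eq_0\<close>)

lemma cyclic_coeff_add: "cyclic_coeff M (R + S) x = cyclic_coeff M R x + cyclic_coeff M S x"
proof -
  let ?n = "max (degree R) (degree S)"
  have "degree (R + S) \<le> ?n"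
    by (rule degree_add_le) auto
  then show ?thesis
    by (simp add: cyclic_coeff_eq_sum_atMost[of _ ?n] sum.distrib[symmetric] if_distrib
        cong: if_cong)
qed

lemma cyclic_coeff_0: "cyclic_coeff M 0 x = 0"
  unfolding cyclic_coeff_def by (simp only: coeff_0 if_cancel sum.neutral_const)

lemma cyclic_coeff_sum: "cyclic_coeff M (\<Sum>i\<in>I. f i) x = (\<Sum>i\<in>I. cyclic_coeff M (f i) x)"
  by (induction I rule: infinite_finite_induct) (auto simp: cyclic_coeff_0 cyclic_coeff_add)

lemma cyclic_coeff_smult: "cyclic_coeff M (smult c R) x = c * cyclic_coeff M R x"
  by (simp add: cyclic_coeff_eq_sum_atMost[of "smult c R" "degree R"] cyclic_coeff_def
      sum_distrib_left if_distrib cong: if_cong)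

lemma cyclic_coeff_monom: "cyclic_coeff M (monom c k) x = (if k mod M = x then c else 0)"
proof -
  have "cyclic_coeff M (monom c k) x = (\<Sum>i\<le>k. if i mod M = x then coeff (monom c k) i else 0)"
    by (rule cyclic_coeff_eq_sum_atMost) (simp add: degree_monom_le)
  also have "\<dots> = (\<Sum>i\<in>{k}. if i mod M = x then coeff (monom c k) i else 0)"
    by (rule sum.mono_neutral_right) auto
  finally show ?thesis by simp
qed

definition dilated_mask :: "nat \<Rightarrow> nat set \<Rightarrow> int poly" where
  "dilated_mask r A = (\<Sum>a\<in>A. monom 1 (r * a))"

definition int_mask :: "nat set \<Rightarrow> int poly" where
  "int_mask B = (\<Sum>b\<in>B. monom 1 b)"

definition rep_count :: "nat \<Rightarrow> nat \<Rightarrow> nat set \<Rightarrow> nat set \<Rightarrow> nat \<Rightarrow> nat" where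
  "rep_count M r A B x = card {p \<in> A \<times> B. (r * fst p + snd p) mod M = x}"

text \<open>\<open>r \<cdot> A \<oplus> B = \<int>\<^sub>M\<close>, where \<open>a \<mapsto> r a\<close> must in addition be injective on \<open>A\<close>.\<close>
definition dilation_tiles :: "nat \<Rightarrow> nat \<Rightarrow> nat set \<Rightarrow> nat set \<Rightarrow> bool" where
  "dilation_tiles M r A B \<longleftrightarrow> (\<forall>x<M. rep_count M r A B x = 1)"

lemma tiling_imp_dilation_tiles_1:
  assumes "tiling M A B"
  shows "dilation_tiles M 1 A B"
  unfolding dilation_tiles_def rep_count_def
proof (intro allI impI)
  fix x assume "x < M"
  then obtain p where "p \<in> A \<times> B \<and> (fst p + snd p) mod M = x"
    and "\<forall>p'. p' \<in> A \<times> B \<and> (fst p' + snd p') mod M = x \<longrightarrow> p' = p"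
    using assms unfolding tiling_def by metis
  then have "{p \<in> A \<times> B. (1 * fst p + snd p) mod M = x} = {p}"
    by auto
  then show "card {p \<in> A \<times> B. (1 * fst p + snd p) mod M = x} = 1"
    by simp
qed

lemma dilated_mask_mult:
  "dilated_mask r A * int_mask B = (\<Sum>p\<in>A \<times> B. monom 1 (r * fst p + snd p))"
proof -
  have "dilated_mask r A * int_mask B = (\<Sum>a\<in>A. \<Sum>b\<in>B. monom 1 (r * a + b))"
    unfolding dilated_mask_def int_mask_def sum_product by (simp add: mult_monom)
  also have "\<dots> = (\<Sum>p\<in>A \<times> B. monom 1 (r * fst p + snd p))"
    by (simp add: sum.cartesian_product case_prod_beta)
  finally show ?thesis .
qed

lemma cyclic_coeff_monom_mult_dilated:
  assumes "finite A" "finite B"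
  shows "cyclic_coeff M (monom c k * (dilated_mask r A * int_mask B)) x =
         int (card {p \<in> A \<times> B. (k + r * fst p + snd p) mod M = x}) * c"
proof -
  have "monom c k * (dilated_mask r A * int_mask B) =
        (\<Sum>p\<in>A \<times> B. monom c (k + r * fst p + snd p))"
    unfolding dilated_mask_mult sum_distrib_left by (simp add: mult_monom add.assoc)
  then show ?thesis
    using assms by (simp add: cyclic_coeff_sum cyclic_coeff_monom sum.If_cases Int_def)
qed

lemma cyclic_coeff_dilated_mult:
  assumes "finite A" "finite B"
  shows "cyclic_coeff M (dilated_mask r A * int_mask B) x = int (rep_count M r A B x)"
  using cyclic_coeff_monom_mult_dilated[OF assms, of M 1 0 r x] by (simp add: rep_count_def)

lemma add_mod_eq_iff:
  fixes k t x M :: nat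
  assumes "x < M"
  shows "(k + t) mod M = x \<longleftrightarrow> t mod M = (x + (M - k mod M)) mod M"
proof -
  have "k mod M < M" "k mod M \<le> k" "k - k mod M = M * (k div M)"
    using assms by (auto simp: minus_mod_eq_mult_div)
  then have key: "k + (M - k mod M) = M * Suc (k div M)"
    unfolding mult_Suc_right by linarith
  have "t mod M = (k + t + (M - k mod M)) mod M"
    using key by (metis add.assoc add.commute mod_mult_self2)
  moreover have "(k + (x + (M - k mod M))) mod M = x"
    using key assms by (metis add.assoc add.commute mod_less mod_mult_self2)
  ultimately show ?thesis
    by (metis mod_add_left_eq mod_add_right_eq)
qed

lemma cyclic_coeff_mult_dilation_tiles:
  assumes "finite A" "finite B" "dilation_tiles M r A B" "x < M"
  shows "cyclic_coeff M (R * (dilated_mask r A * int_mask B)) x = poly R 1"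
proof -
  have "card {p \<in> A \<times> B. (k + r * fst p + snd p) mod M = x} = 1" for k
  proof -
    have "(x + (M - k mod M)) mod M < M"
      using assms(4) by simp
    then have "rep_count M r A B ((x + (M - k mod M)) mod M) = 1"
      using assms(3) unfolding dilation_tiles_def by blast
    then show ?thesis
      unfolding rep_count_def using add_mod_eq_iff[OF assms(4), of k]
      by (simp add: add.assoc)
  qed
  then have "cyclic_coeff M (monom c k * (dilated_mask r A * int_mask B)) x = c" for c k
    by (simp add: cyclic_coeff_monom_mult_dilated[OF assms(1,2)])
  moreover have "R * (dilated_mask r A * int_mask B) =
      (\<Sum>i\<le>degree R. monom (coeff R i) i * (dilated_mask r A * int_mask B))"
    by (subst poly_as_sum_of_monoms[symmetric, of R]) (simp add: sum_distrib_right)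
  ultimately show ?thesis
    by (simp add: cyclic_coeff_sum poly_altdef)
qed

lemma prime_dvd_power_add_sub_power:
  fixes X Y :: "int poly"
  assumes p: "prime p"
  shows "[:int p:] dvd (X + Y) ^ p - X ^ p - Y ^ p"
proof -
  have p1: "p > 1" using p prime_gt_1_nat by blast
  have "{..p} = insert 0 (insert p {0<..<p})" using p1 by auto
  then have "(X + Y) ^ p - X ^ p - Y ^ p = (\<Sum>k\<in>{0<..<p}. of_nat (p choose k) * X ^ k * Y ^ (p - k))"
    using p1 by (simp add: binomial_ring algebra_simps)
  moreover have "[:int p:] dvd of_nat (p choose k) * X ^ k * Y ^ (p - k)" if "k \<in> {0<..<p}" for k
  proof -
    have "p dvd p choose k"
      using that p by (simp add: dvd_choose_prime)
    then obtain m where "p choose k = p * m" ..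
    then have "(of_nat (p choose k) :: int poly) = [:int p:] * of_nat m"
      by (simp add: of_nat_poly)
    then show ?thesis by (metis dvd_triv_left mult.assoc)
  qed
  ultimately show ?thesis
    by (auto intro!: dvd_sum)
qed

lemma prime_dvd_dilated_mask_power:
  assumes p: "prime p" and "finite A"
  shows "[:int p:] dvd dilated_mask r A ^ p - dilated_mask (p * r) A"
  using \<open>finite A\<close>
proof (induction A rule: finite_induct)
  case empty
  then show ?case using p prime_gt_0_nat by (simp add: dilated_mask_def zero_power)
next
  case (insert a A)
  have "monom (1::int) (r * a) ^ p = monom 1 (p * r * a)"
    by (simp add: monom_power mult.commute mult.left_commute)
  then have "dilated_mask r (insert a A) ^ p - dilated_mask (p * r) (insert a A) =
     ((monom 1 (r * a) + dilated_mask r A) ^ p - monom 1 (r * a) ^ p - dilated_mask r A ^ p)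
     + (dilated_mask r A ^ p - dilated_mask (p * r) A)"
    using insert.hyps by (simp add: dilated_mask_def)
  then show ?case
    by (metis dvd_add prime_dvd_power_add_sub_power[OF p] insert.IH)
qed

lemma sum_rep_count:
  assumes "finite A" "finite B" "M > 0"
  shows "(\<Sum>x<M. rep_count M r A B x) = card A * card B"
proof -
  have "(\<Sum>x<M. rep_count M r A B x) =
        (\<Sum>x\<in>{..<M}. \<Sum>p\<in>{p. p \<in> A \<times> B \<and> (r * fst p + snd p) mod M = x}. 1)"
    by (simp add: rep_count_def)
  also have "\<dots> = (\<Sum>p\<in>A \<times> B. 1)"
    by (rule sum.group) (use assms in auto)
  finally show ?thesis by (simp add: card_cartesian_product)
qed

lemma dilation_tiles_card:
  assumes "finite A" "finite B" "dilation_tiles M r A B" "M > 0"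
  shows "card A * card B = M"
  using sum_rep_count[OF assms(1,2,4), of r] assms(3) by (simp add: dilation_tiles_def)

text \<open>Reading off the coefficients of \<open>A(X)\<^sup>p B(X) \<equiv> A(X\<^sup>p) B(X) (mod p)\<close> modulo \<open>X\<^sup>M - 1\<close>.\<close>
lemma prime_dvd_rep_count_prime_mult:
  assumes fin: "finite A" "finite B" and tiles: "dilation_tiles M r A B"
    and p: "prime p" and x: "x < M"
  shows "int p dvd int (card A) ^ (p - 1) - int (rep_count M (p * r) A B x)"
proof -
  obtain K where K: "dilated_mask r A ^ p = dilated_mask (p * r) A + [:int p:] * K"
    using prime_dvd_dilated_mask_power[OF p fin(1), of r] by (auto simp: dvd_def algebra_simps)
  have "dilated_mask r A ^ p = dilated_mask r A ^ (p - 1) * dilated_mask r A"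
    using p prime_gt_0_nat by (simp flip: power_Suc2)
  then have "cyclic_coeff M (dilated_mask r A ^ p * int_mask B) x = int (card A) ^ (p - 1)"
    using cyclic_coeff_mult_dilation_tiles[OF fin tiles x, of "dilated_mask r A ^ (p - 1)"] fin(1)
    by (simp add: mult.assoc poly_power dilated_mask_def poly_sum poly_monom)
  moreover have "dilated_mask r A ^ p * int_mask B =
      dilated_mask (p * r) A * int_mask B + smult (int p) (K * int_mask B)"
    by (simp add: K algebra_simps)
  ultimately have "int (card A) ^ (p - 1) =
      int (rep_count M (p * r) A B x) + int p * cyclic_coeff M (K * int_mask B) x"
    by (simp add: cyclic_coeff_add cyclic_coeff_smult cyclic_coeff_dilated_mult[OF fin])
  then show ?thesis by simp
qed

lemma all_eq_1_if_sum_eq_card: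
  fixes f :: "nat \<Rightarrow> nat"
  assumes "\<forall>x<M. f x \<ge> 1" "(\<Sum>x<M. f x) = M"
  shows "\<forall>x<M. f x = 1"
proof -
  have "(\<Sum>x<M. f x - 1) = (\<Sum>x<M. f x) - (\<Sum>x<M. 1)"
    using assms(1) by (subst sum_subtractf_nat) auto
  then have "(\<Sum>x<M. f x - 1) = 0"
    using assms(2) by simp
  then have "\<forall>x<M. f x - 1 = 0"
    by simp
  then show ?thesis
    using assms(1) by (meson diff_is_0_eq le_antisym)
qed

lemma dilation_tiles_prime_mult:
  assumes fin: "finite A" "finite B" and tiles: "dilation_tiles M r A B" and M: "M > 0"
    and p: "prime p" and "\<not> p dvd M"
  shows "dilation_tiles M (p * r) A B"
proof -
  have card: "card A * card B = M"
    using dilation_tiles_card[OF fin tiles M] .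
  then have "\<not> int p dvd int (card A) ^ (p - 1)"
    using \<open>\<not> p dvd M\<close> p by (metis dvd_mult2 int_dvd_int_iff of_nat_power prime_dvd_power)
  then have "rep_count M (p * r) A B x \<noteq> 0" if "x < M" for x
    using prime_dvd_rep_count_prime_mult[OF fin tiles p that] by (metis diff_0_right of_nat_0)
  moreover have "(\<Sum>x<M. rep_count M (p * r) A B x) = M"
    using sum_rep_count[OF fin M] card by simp
  ultimately show ?thesis
    unfolding dilation_tiles_def by (intro all_eq_1_if_sum_eq_card) (auto simp: Suc_le_eq)
qed

lemma dilation_tiles_coprime:
  assumes fin: "finite A" "finite B" and tiles: "dilation_tiles M 1 A B" and M: "M > 0"
  shows "coprime r M \<Longrightarrow> dilation_tiles M r A B"
proof (induction r rule: less_induct)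
  case (less r)
  show ?case
  proof (cases "r \<le> 1")
    case True
    then have "r = 1 \<or> M = 1"
      using less.prems by (cases "r = 0") auto
    then show ?thesis
      using tiles by (auto simp: dilation_tiles_def rep_count_def)
  next
    case False
    then obtain p where p: "prime p" "p dvd r"
      using prime_factor_nat[of r] by auto
    then obtain s where r: "r = p * s"
      by blast
    then have "s \<noteq> 0"
      using False r by (cases s) auto
    then have "s < r" "coprime s M"
      using r less.prems prime_gt_1_nat[OF p(1)] by auto
    moreover have "\<not> p dvd M"
      using less.prems p by (metis coprime_common_divisor not_prime_unit)
    ultimately show ?thesis
      using dilation_tiles_prime_mult[OF fin less.IH M p(1)] r by blast
  qed
qed

section \<open>Sands' theorem\<close>

lemma coprime_if_no_common_prime:
  fixes a b :: nat
  assumes "\<And>p. prime p \<Longrightarrow> p dvd b \<Longrightarrow> \<not> p dvd a"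
  shows "coprime a b"
proof (rule coprimeI, rule ccontr)
  fix c assume "c dvd a" "c dvd b" "\<not> is_unit c"
  then have "c \<noteq> 1"
    by auto
  then obtain p where "prime p" "p dvd c"
    using prime_factor_nat by blast
  then show False
    using \<open>c dvd a\<close> \<open>c dvd b\<close> assms[of p] by (meson dvd_trans)
qed

lemma exists_coprime_in_residue_class:
  fixes r0 m M :: nat
  assumes "M > 0" "coprime r0 m"
  shows "\<exists>r. r mod m = r0 mod m \<and> coprime r M"
proof -
  define S where "S = {p. prime p \<and> p dvd M \<and> \<not> p dvd r0}"
  have "finite S"
    unfolding S_def by (rule finite_subset[of _ "{..M}"]) (use assms(1) in \<open>auto dest: dvd_imp_le\<close>)
  define r where "r = r0 + m * \<Prod>S"
  have no_prime_divisor: "\<not> p dvd r" if p: "prime p" "p dvd M" for p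
  proof (cases "p dvd r0")
    case True
    then have "\<not> p dvd m"
      using assms(2) p(1) by (metis coprime_common_divisor not_prime_unit)
    moreover have "\<not> p dvd \<Prod>S"
    proof
      assume "p dvd \<Prod>S"
      then obtain q where "q \<in> S" "p dvd q"
        using prime_dvd_prod_iff[OF \<open>finite S\<close> p(1)] by auto
      then show False
        using True p(1) primes_dvd_imp_eq[of p q] by (auto simp: S_def)
    qed
    ultimately show ?thesis
      using True p(1) by (simp add: r_def dvd_add_right_iff prime_dvd_mult_iff)
  next
    case False
    then have "p \<in> S"
      using p by (simp add: S_def)
    then have "p dvd \<Prod>S"
      using dvd_prodI[OF \<open>finite S\<close>, of p "\<lambda>q. q"] by simp
    then show ?thesis
      using False by (simp add: r_def dvd_add_left_iff)
  qed
  have "coprime r M"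
    using no_prime_divisor by (rule coprime_if_no_common_prime)
  moreover have "r mod m = r0 mod m"
    by (simp add: r_def)
  ultimately show ?thesis
    by blast
qed

lemma exists_coprime_solution:
  fixes u w :: int and m M :: nat
  assumes "M > 0" "m > 0" "coprime u (int m)" "coprime w (int m)"
  shows "\<exists>r::nat. coprime r M \<and> int m dvd int r * u - w"
proof -
  obtain s t where st: "s * u + t * int m = 1"
    using bezout_int[of u "int m"] assms(3) by (auto simp: coprime_iff_gcd_eq_1)
  then have "coprime s (int m)"
    by (intro coprimeI) (metis dvd_add dvd_mult dvd_mult2)
  then have "coprime (s * w mod int m) (int m)"
    using assms(2,4) by simp
  moreover define r0 where "r0 = nat (s * w mod int m)"
  ultimately have r0: "int r0 = s * w mod int m" "coprime r0 m"
    using assms(2) by (simp_all add: r0_def flip: coprime_int_iff)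
  obtain r where r: "r mod m = r0 mod m" "coprime r M"
    using exists_coprime_in_residue_class[OF assms(1) r0(2)] by blast
  have "int r mod int m = s * w mod int m"
    using r(1) r0(1) by (metis zmod_int mod_mod_trivial)
  then have "int m dvd (int r - s * w) * u - w * t * int m"
    by (simp add: mod_eq_dvd_iff)
  moreover have "(int r - s * w) * u - w * t * int m = int r * u - w"
    using st by algebra
  ultimately show ?thesis
    using r(2) by auto
qed

lemma exists_coprime_multiplier:
  fixes \<alpha> \<beta> :: int and M :: nat
  assumes M: "M > 0" and same_divisors: "\<forall>d. d dvd int M \<longrightarrow> (d dvd \<alpha> \<longleftrightarrow> d dvd \<beta>)"
  shows "\<exists>r::nat. coprime r M \<and> int M dvd int r * \<alpha> - \<beta>"
proof -
  define g where "g = gcd \<alpha> (int M)"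
  have "g > 0"
    using M by (simp add: g_def)
  have "g dvd \<beta>"
    using same_divisors[rule_format, of g] by (simp add: g_def)
  moreover have "gcd \<beta> (int M) dvd \<alpha>"
    using same_divisors[rule_format, of "gcd \<beta> (int M)"] by simp
  ultimately have g_\<beta>: "gcd \<beta> (int M) = g"
    by (intro zdvd_antisym_nonneg) (simp_all add: g_def)
  obtain u w m' where uwm: "\<alpha> = g * u" "\<beta> = g * w" "int M = g * m'"
    using \<open>g dvd \<beta>\<close> by (metis g_def dvdE gcd_dvd1 gcd_dvd2)
  have "coprime (\<alpha> div g) (int M div g)" "coprime (\<beta> div g) (int M div g)"
    using div_gcd_coprime[of \<alpha> "int M"] div_gcd_coprime[of \<beta> "int M"] M
    by (simp_all add: g_\<beta> flip: g_def)
  then have "coprime u m'" "coprime w m'"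
    using uwm \<open>g > 0\<close> by simp_all
  have "m' > 0"
    using M \<open>g > 0\<close> uwm(3) by (metis of_nat_0_less_iff zero_less_mult_pos)
  define m where "m = nat m'"
  then have m: "m' = int m" "m > 0"
    using \<open>m' > 0\<close> by simp_all
  obtain r where r: "coprime r M" "int m dvd int r * u - w"
    using exists_coprime_solution[OF M m(2)] \<open>coprime u m'\<close> \<open>coprime w m'\<close> m(1) by blast
  then have "g * int m dvd g * (int r * u - w)"
    by simp
  then have "int M dvd int r * \<alpha> - \<beta>"
    using uwm m(1) by (simp add: algebra_simps)
  with r(1) show ?thesis
    by blast
qed

text \<open>Sands' theorem \<open>Div(A) \<inter> Div(B) = {M}\<close>, in the form: differences of \<open>A\<close> and of \<open>B\<close>
  with the same divisors among those of \<open>M\<close> vanish.\<close>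
theorem tiling_same_divisors_imp_eq:
  assumes tiling: "tiling M A B" and M: "M > 0"
    and ab: "a \<in> A" "a' \<in> A" "b \<in> B" "b' \<in> B"
    and same_divisors: "\<forall>d. d dvd int M \<longrightarrow> (d dvd int a - int a' \<longleftrightarrow> d dvd int b - int b')"
  shows "a = a' \<and> b = b'"
proof -
  have fin: "finite A" "finite B"
    using tiling unfolding tiling_def by (auto intro: finite_subset)
  obtain r where r: "coprime r M" "int M dvd int r * (int a - int a') - (int b - int b')"
    using exists_coprime_multiplier[OF M same_divisors] by blast
  have "dilation_tiles M r A B"
    using dilation_tiles_coprime[OF fin tiling_imp_dilation_tiles_1[OF tiling] M r(1)] .
  moreover define x where "x = (r * a + b') mod M"
  moreover have "(r * a' + b) mod M = x"
  proof -
    have "int M dvd int (r * a + b') - int (r * a' + b)"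
      using r(2) by (simp add: algebra_simps)
    then have "int (r * a + b') mod int M = int (r * a' + b) mod int M"
      by (simp only: mod_eq_dvd_iff)
    then show ?thesis
      unfolding x_def by (metis of_nat_eq_iff zmod_int)
  qed
  ultimately have "card {p \<in> A \<times> B. (r * fst p + snd p) mod M = x} = 1"
    "(a, b') \<in> {p \<in> A \<times> B. (r * fst p + snd p) mod M = x}"
    "(a', b) \<in> {p \<in> A \<times> B. (r * fst p + snd p) mod M = x}"
    using M ab unfolding dilation_tiles_def rep_count_def by auto
  then have "(a, b') = (a', b)"
    by (elim card_1_singletonE) simp
  then show ?thesis
    by simp
qed

section \<open>Fibers of a tiling in a prime power direction\<close>

lemma tiling_commute:
  assumes "tiling M A B"
  shows "tiling M B A"
  unfolding tiling_def
proof (intro conjI allI impI)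
  show "B \<subseteq> {0..<M}" "A \<subseteq> {0..<M}"
    using assms by (simp_all add: tiling_def)
  fix x assume "x < M"
  then obtain p where p: "p \<in> A \<times> B" "(fst p + snd p) mod M = x"
    and uniq: "\<And>p'. p' \<in> A \<times> B \<Longrightarrow> (fst p' + snd p') mod M = x \<Longrightarrow> p' = p"
    using assms unfolding tiling_def by metis
  show "\<exists>!p. p \<in> B \<times> A \<and> (fst p + snd p) mod M = x"
  proof (rule ex1I[of _ "prod.swap p"])
    show "prod.swap p \<in> B \<times> A \<and> (fst (prod.swap p) + snd (prod.swap p)) mod M = x"
      using p by (auto simp: add.commute)
    fix p' assume "p' \<in> B \<times> A \<and> (fst p' + snd p') mod M = x"
    then have "prod.swap p' = p"
      using uniq[of "prod.swap p'"] by (auto simp: add.commute)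
    then show "p' = prod.swap p"
      by auto
  qed
qed

lemma int_dvd_mod_diff:
  fixes q M x :: nat
  assumes "q dvd M"
  shows "int q dvd int (x mod M) - int x"
proof -
  have "int M dvd int (x mod M) - int x"
    using mod_eq_dvd_iff[of "int x mod int M" "int M" "int x"] by (simp add: zmod_int)
  then show ?thesis
    using assms by (meson dvd_trans int_dvd_int_iff)
qed

lemma eq_xor_dichotomy:
  assumes "\<And>w w'. w \<in> Z \<Longrightarrow> w' \<in> Z \<Longrightarrow> w \<noteq> w' \<Longrightarrow> f w = f w' \<longleftrightarrow> g w \<noteq> g w'"
  shows "(\<forall>w\<in>Z. \<forall>w'\<in>Z. f w = f w') \<or> (\<forall>w\<in>Z. \<forall>w'\<in>Z. g w = g w')"
proof (rule disjCI)
  assume "\<not> (\<forall>w\<in>Z. \<forall>w'\<in>Z. g w = g w')"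
  then obtain w1 w2 where w: "w1 \<in> Z" "w2 \<in> Z" "g w1 \<noteq> g w2"
    by blast
  then have "f w1 = f w2"
    using assms[OF w(1,2)] by auto
  have "f u = f w1" if "u \<in> Z" for u
  proof (cases "g u = g w1")
    case True
    then have "f u = f w2"
      using assms[OF that w(2)] w(3) by auto
    with \<open>f w1 = f w2\<close> show ?thesis
      by simp
  next
    case False
    then show ?thesis
      using assms[OF that w(1)] by auto
  qed
  then show "\<forall>w\<in>Z. \<forall>w'\<in>Z. f w = f w'"
    by simp
qed

definition aligned :: "nat \<Rightarrow> nat set \<Rightarrow> bool" where
  "aligned q X \<longleftrightarrow> (\<forall>x\<in>X. \<forall>x'\<in>X. int q dvd int x - int x')"

lemma aligned_image_iff: "aligned q (f ` T) \<longleftrightarrow> (\<forall>t\<in>T. \<forall>t'\<in>T. int q dvd int (f t) - int (f t'))"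
  by (simp add: aligned_def)

lemma dvd_mult_prime_power_imp_dvd_pred:
  fixes p n R d :: nat
  assumes p: "prime p" and n: "n \<ge> 1" and d: "d dvd R * p ^ n" and nd: "\<not> p ^ n dvd d"
  shows "d dvd R * p ^ (n - 1)"
proof -
  obtain i where i: "i \<le> n" "gcd d (p ^ n) = p ^ i"
    using divides_primepow_nat[OF p, of "gcd d (p ^ n)" n] by auto
  then have "i \<noteq> n"
    using nd by (metis gcd_dvd1)
  then have "p ^ i dvd p ^ (n - 1)"
    using i(1) by (simp add: le_imp_power_dvd)
  moreover have "d dvd R * gcd d (p ^ n)"
    using d by (metis dvd_triv_right gcd_greatest gcd_mult_distrib_nat mult.commute)
  ultimately show ?thesis
    using i(2) by (metis dvd_trans mult_dvd_mono dvd_refl)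
qed

locale prime_power_tiling =
  fixes M :: nat and A B :: "nat set" and p n R :: nat
  assumes tiling: "tiling M A B"
    and prime: "prime p" and n_pos: "n \<ge> 1" and M_eq: "M = R * p ^ n" and not_dvd_R: "\<not> p dvd R"
begin

definition decomp :: "nat \<Rightarrow> nat \<times> nat" where
  "decomp w = (THE ab. ab \<in> A \<times> B \<and> (fst ab + snd ab) mod M = w)"

abbreviation a_of :: "nat \<Rightarrow> nat" where "a_of w \<equiv> fst (decomp w)"
abbreviation b_of :: "nat \<Rightarrow> nat" where "b_of w \<equiv> snd (decomp w)"

abbreviation fiber :: "nat \<Rightarrow> nat set" where "fiber z \<equiv> tr M z (fib M p)"

abbreviation A_aligned :: "nat \<Rightarrow> bool" where "A_aligned z \<equiv> aligned (p ^ n) (Sig M A B (fiber z))"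

lemma M_pos: "M > 0"
proof -
  have "R \<noteq> 0"
    using not_dvd_R by (metis dvd_0_right)
  then show ?thesis
    by (simp add: M_eq prime_gt_0_nat[OF prime])
qed

lemma ex1_decomp: "w < M \<Longrightarrow> \<exists>!ab. ab \<in> A \<times> B \<and> (fst ab + snd ab) mod M = w"
  using tiling unfolding tiling_def by blast

lemma decomp_spec:
  assumes "w < M"
  shows "a_of w \<in> A" "b_of w \<in> B" "(a_of w + b_of w) mod M = w"
  using theI'[OF ex1_decomp[OF assms]] unfolding decomp_def by auto

lemma decomp_unique:
  assumes "a \<in> A" "b \<in> B" "(a + b) mod M = w"
  shows "a_of w = a" "b_of w = b"
proof -
  have "w < M"
    using assms(3) M_pos by auto
  then have "decomp w = (a, b)"
    unfolding decomp_def using assms by (intro the1_equality[OF ex1_decomp]) auto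
  then show "a_of w = a" "b_of w = b"
    by auto
qed

lemma Sig_eq_image:
  assumes "Z \<subseteq> {..<M}"
  shows "Sig M A B Z = a_of ` Z" "Sig M B A Z = b_of ` Z"
proof -
  show "Sig M A B Z = a_of ` Z"
  proof (intro equalityI subsetI)
    fix x assume "x \<in> Sig M A B Z"
    then obtain b where "x \<in> A" "b \<in> B" "(x + b) mod M \<in> Z"
      unfolding Sig_def by blast
    then show "x \<in> a_of ` Z"
      using decomp_unique(1)[of x b] by (simp add: rev_image_eqI)
  next
    fix x assume "x \<in> a_of ` Z"
    then obtain w where "w \<in> Z" "x = a_of w"
      by blast
    moreover have "w < M"
      using assms \<open>w \<in> Z\<close> by auto
    ultimately show "x \<in> Sig M A B Z"
      using decomp_spec[OF \<open>w < M\<close>] \<open>w \<in> Z\<close> unfolding Sig_def by (auto intro!: bexI[of _ "b_of w"])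
  qed
  show "Sig M B A Z = b_of ` Z"
  proof (intro equalityI subsetI)
    fix x assume "x \<in> Sig M B A Z"
    then obtain a where "x \<in> B" "a \<in> A" "(x + a) mod M \<in> Z"
      unfolding Sig_def by blast
    then show "x \<in> b_of ` Z"
      using decomp_unique(2)[of a x] by (simp add: rev_image_eqI add.commute)
  next
    fix x assume "x \<in> b_of ` Z"
    then obtain w where "w \<in> Z" "x = b_of w"
      by blast
    moreover have "w < M"
      using assms \<open>w \<in> Z\<close> by auto
    ultimately show "x \<in> Sig M B A Z"
      using decomp_spec[OF \<open>w < M\<close>] \<open>w \<in> Z\<close> unfolding Sig_def
      by (auto simp: add.commute intro!: bexI[of _ "a_of w"])
  qed
qed

lemma decomp_shift:
  assumes "w < M" "(a_of w + e) mod M \<in> A"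
  shows "a_of ((w + e) mod M) = (a_of w + e) mod M" "b_of ((w + e) mod M) = b_of w"
proof -
  have "((a_of w + e) mod M + b_of w) mod M = (a_of w + e + b_of w) mod M"
    by (rule mod_add_left_eq)
  also have "\<dots> = (a_of w + b_of w + e) mod M"
    by (simp add: ac_simps)
  also have "\<dots> = ((a_of w + b_of w) mod M + e) mod M"
    by (rule mod_add_left_eq[symmetric])
  also have "\<dots> = (w + e) mod M"
    using decomp_spec(3)[OF assms(1)] by simp
  finally have "((a_of w + e) mod M + b_of w) mod M = (w + e) mod M" .
  from decomp_unique[OF assms(2) decomp_spec(2)[OF assms(1)] this]
  show "a_of ((w + e) mod M) = (a_of w + e) mod M" "b_of ((w + e) mod M) = b_of w" .
qed

lemma decomp_diff_dvd:
  fixes \<delta> :: int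
  assumes w: "w < M" "w' < M" and \<delta>: "int M dvd int w - int w' - \<delta>"
  shows "int M dvd (int (a_of w) - int (a_of w')) + (int (b_of w) - int (b_of w')) - \<delta>"
proof -
  have decomp_dvd: "int M dvd int v - int (a_of v + b_of v)" if "v < M" for v
    using int_dvd_mod_diff[of M M "a_of v + b_of v"] decomp_spec(3)[OF that] by simp
  have "(int (a_of w) - int (a_of w')) + (int (b_of w) - int (b_of w')) - \<delta> =
      (int w - int w' - \<delta>) - (int w - int (a_of w + b_of w)) + (int w' - int (a_of w' + b_of w'))"
    by simp
  then show ?thesis
    by (simp only:) (intro dvd_add dvd_diff \<delta> decomp_dvd w)
qed

text \<open>If neither difference were divisible by \<open>p\<^sup>n\<close>, every divisor of \<open>M\<close> dividing one of them
  would divide \<open>\<delta>\<close>, hence the other one, and Sands' theorem would force \<open>w = w'\<close>.\<close>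
lemma decomp_diff_prime_power_dvd:
  fixes \<delta> :: int
  assumes w: "w < M" "w' < M" and \<delta>: "int M dvd int w - int w' - \<delta>"
    and dvd_\<delta>: "int (R * p ^ (n - 1)) dvd \<delta>"
  defines "\<alpha> \<equiv> int (a_of w) - int (a_of w')" and "\<beta> \<equiv> int (b_of w) - int (b_of w')"
  shows "int (p ^ n) dvd \<alpha> \<or> int (p ^ n) dvd \<beta>"
proof (rule ccontr)
  assume neither: "\<not> ?thesis"
  have \<delta>_if: "d dvd \<delta>" if "d dvd int M" "d dvd x" "\<not> int (p ^ n) dvd x" for d x
  proof -
    have "\<not> int (p ^ n) dvd d"
      using that(2,3) by (meson dvd_trans)
    then have "nat \<bar>d\<bar> dvd R * p ^ n" "\<not> p ^ n dvd nat \<bar>d\<bar>"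
      using that(1) by (simp_all add: M_eq)
    then have "nat \<bar>d\<bar> dvd R * p ^ (n - 1)"
      by (intro dvd_mult_prime_power_imp_dvd_pred[OF prime n_pos])
    then have "d dvd int (R * p ^ (n - 1))"
      by simp
    then show ?thesis
      using dvd_\<delta> by (rule dvd_trans)
  qed
  have "d dvd \<alpha> \<longleftrightarrow> d dvd \<beta>" if "d dvd int M" for d
  proof -
    have "d dvd \<alpha> + \<beta>" if "d dvd \<delta>"
      using dvd_add[OF dvd_trans[OF \<open>d dvd int M\<close> decomp_diff_dvd[OF w \<delta>]] that]
      by (simp add: \<alpha>_def \<beta>_def)
    moreover have "d dvd \<delta>" if "d dvd \<alpha> \<or> d dvd \<beta>"
      using \<delta>_if[OF \<open>d dvd int M\<close>] neither that by blast
    ultimately show ?thesis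
      using dvd_add_right_iff[of d \<alpha> \<beta>] dvd_add_left_iff[of d \<beta> \<alpha>] by blast
  qed
  then have "a_of w = a_of w'"
    using tiling_same_divisors_imp_eq[OF tiling M_pos decomp_spec(1)[OF w(1)] decomp_spec(1)[OF w(2)]
        decomp_spec(2)[OF w(1)] decomp_spec(2)[OF w(2)]]
    unfolding \<alpha>_def \<beta>_def by blast
  then show False
    using neither by (simp add: \<alpha>_def)
qed

lemma decomp_diff_parity:
  fixes \<delta> :: int
  assumes w: "w < M" "w' < M" and \<delta>: "int M dvd int w - int w' - \<delta>"
    and dvd_\<delta>: "int (R * p ^ (n - 1)) dvd \<delta>" and not_dvd_\<delta>: "\<not> int (p ^ n) dvd \<delta>"
  defines "\<alpha> \<equiv> int (a_of w) - int (a_of w')" and "\<beta> \<equiv> int (b_of w) - int (b_of w')"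
  shows "(int (p ^ n) dvd \<alpha> \<longleftrightarrow> \<not> int (p ^ n) dvd \<beta>) \<and>
         int (p ^ (n - 1)) dvd \<alpha> \<and> int (p ^ (n - 1)) dvd \<beta>"
proof -
  have one: "int (p ^ n) dvd \<alpha> \<or> int (p ^ n) dvd \<beta>"
    unfolding \<alpha>_def \<beta>_def by (rule decomp_diff_prime_power_dvd[OF w \<delta> dvd_\<delta>])
  have M_dvd: "int M dvd \<alpha> + \<beta> - \<delta>"
    unfolding \<alpha>_def \<beta>_def by (rule decomp_diff_dvd[OF w \<delta>])
  have q_dvd_M: "int (p ^ n) dvd int M"
    unfolding M_eq by simp
  have "int (p ^ n) dvd (\<alpha> + \<beta> - \<delta>) + \<delta> \<longleftrightarrow> int (p ^ n) dvd \<delta>"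
    by (rule dvd_add_right_iff[OF dvd_trans[OF q_dvd_M M_dvd]])
  then have not_both: "\<not> (int (p ^ n) dvd \<alpha> \<and> int (p ^ n) dvd \<beta>)"
    using not_dvd_\<delta> by auto
  have pred_dvd_q: "int (p ^ (n - 1)) dvd int (p ^ n)"
    by (simp add: le_imp_power_dvd)
  have "int (p ^ (n - 1)) dvd (\<alpha> + \<beta> - \<delta>) + \<delta>"
    using dvd_trans[OF pred_dvd_q dvd_trans[OF q_dvd_M M_dvd]]
      dvd_trans[OF _ dvd_\<delta>, of "int (p ^ (n - 1))"]
    by (intro dvd_add) simp_all
  then have "int (p ^ (n - 1)) dvd \<alpha> + \<beta>"
    by simp
  moreover have "int (p ^ (n - 1)) dvd \<alpha> \<or> int (p ^ (n - 1)) dvd \<beta>"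
    using one by (meson dvd_trans pred_dvd_q)
  ultimately have "int (p ^ (n - 1)) dvd \<alpha> \<and> int (p ^ (n - 1)) dvd \<beta>"
    using dvd_add_right_iff[of "int (p ^ (n - 1))" \<alpha> \<beta>]
      dvd_add_left_iff[of "int (p ^ (n - 1))" \<beta> \<alpha>] by blast
  with one not_both show ?thesis
    by blast
qed

lemma M_div_p: "M div p = R * p ^ (n - 1)"
proof -
  have "M = p * (R * p ^ (n - 1))"
    using n_pos by (simp add: M_eq power_eq_if)
  then show ?thesis
    using prime_gt_0_nat[OF prime] by simp
qed

lemma fiber_eq_image: "fiber z = (\<lambda>t. (z + t * (M div p)) mod M) ` {..<p}"
  unfolding tr_def fib_def by auto

lemma fiber_subset: "fiber z \<subseteq> {..<M}"
  using M_pos unfolding fiber_eq_image by auto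

lemma not_dvd_fiber_step:
  assumes "t < p" "t' < p" "t \<noteq> t'"
  shows "\<not> int (p ^ n) dvd (int t - int t') * int (M div p)"
proof
  define c where "c = nat \<bar>int t - int t'\<bar>"
  assume "int (p ^ n) dvd (int t - int t') * int (M div p)"
  moreover have "nat \<bar>(int t - int t') * int (M div p)\<bar> = c * (M div p)"
    unfolding c_def nat_abs_mult_distrib by simp
  ultimately have "p ^ (n - 1) * p dvd p ^ (n - 1) * (c * R)"
    using n_pos by (metis dvd_nat_abs_iff M_div_p mult.commute mult.left_commute power_eq_if
        not_one_le_zero)
  then have "p dvd c * R"
    using prime_gt_0_nat[OF prime] by simp
  moreover have "0 < c" "c < p"
    using assms by (auto simp: c_def)
  ultimately show False
    using not_dvd_R prime by (auto simp: prime_dvd_mult_iff dest: dvd_imp_le)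
qed

lemma fiber_point_parity:
  fixes z t t' :: nat
  assumes t: "t < p" "t' < p" "t \<noteq> t'"
  defines "w \<equiv> (z + t * (M div p)) mod M" and "w' \<equiv> (z + t' * (M div p)) mod M"
  defines "\<alpha> \<equiv> int (a_of w) - int (a_of w')" and "\<beta> \<equiv> int (b_of w) - int (b_of w')"
  shows "(int (p ^ n) dvd \<alpha> \<longleftrightarrow> \<not> int (p ^ n) dvd \<beta>) \<and>
         int (p ^ (n - 1)) dvd \<alpha> \<and> int (p ^ (n - 1)) dvd \<beta>"
  unfolding \<alpha>_def \<beta>_def
proof (rule decomp_diff_parity)
  show "w < M" "w' < M"
    using M_pos by (simp_all add: w_def w'_def)
  have "int w - int w' - (int t - int t') * int (M div p) =
      (int w - int (z + t * (M div p))) - (int w' - int (z + t' * (M div p)))"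
    by (simp add: algebra_simps)
  then show "int M dvd int w - int w' - (int t - int t') * int (M div p)"
    unfolding w_def w'_def by (simp only:) (intro dvd_diff int_dvd_mod_diff dvd_refl)
  show "int (R * p ^ (n - 1)) dvd (int t - int t') * int (M div p)"
    by (simp add: M_div_p)
  show "\<not> int (p ^ n) dvd (int t - int t') * int (M div p)"
    using not_dvd_fiber_step[OF t] .
qed

lemma Sig_fiber_eq:
  "Sig M A B (fiber z) = (\<lambda>t. a_of ((z + t * (M div p)) mod M)) ` {..<p}"
  "Sig M B A (fiber z) = (\<lambda>t. b_of ((z + t * (M div p)) mod M)) ` {..<p}"
  unfolding Sig_eq_image[OF fiber_subset] by (simp_all only: fiber_eq_image image_image)

lemma aligned_fiber_iff:
  "aligned q (Sig M A B (fiber z)) \<longleftrightarrow> (\<forall>t<p. \<forall>t'<p.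
     int q dvd int (a_of ((z + t * (M div p)) mod M)) - int (a_of ((z + t' * (M div p)) mod M)))"
  "aligned q (Sig M B A (fiber z)) \<longleftrightarrow> (\<forall>t<p. \<forall>t'<p.
     int q dvd int (b_of ((z + t * (M div p)) mod M)) - int (b_of ((z + t' * (M div p)) mod M)))"
  unfolding Sig_fiber_eq aligned_image_iff by auto

lemma fiber_aligned_A_or_B: "A_aligned z \<or> aligned (p ^ n) (Sig M B A (fiber z))"
proof -
  let ?w = "\<lambda>t. (z + t * (M div p)) mod M"
  have "(\<forall>t\<in>{..<p}. \<forall>t'\<in>{..<p}.
          int (a_of (?w t)) mod int (p ^ n) = int (a_of (?w t')) mod int (p ^ n)) \<or>
        (\<forall>t\<in>{..<p}. \<forall>t'\<in>{..<p}.
          int (b_of (?w t)) mod int (p ^ n) = int (b_of (?w t')) mod int (p ^ n))"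
  proof (rule eq_xor_dichotomy)
    fix t t' assume "t \<in> {..<p}" "t' \<in> {..<p}" "t \<noteq> t'"
    then show "int (a_of (?w t)) mod int (p ^ n) = int (a_of (?w t')) mod int (p ^ n) \<longleftrightarrow>
        int (b_of (?w t)) mod int (p ^ n) \<noteq> int (b_of (?w t')) mod int (p ^ n)"
      using fiber_point_parity[of t t' z] by (simp add: mod_eq_dvd_iff)
  qed
  then show ?thesis
    unfolding aligned_fiber_iff by (simp add: mod_eq_dvd_iff Ball_def)
qed

lemma splits_if_aligned:
  assumes "A_aligned z"
  shows "splits M A B p n (fiber z)"
  unfolding splits_def
proof (intro conjI ballI impI)
  let ?w = "\<lambda>t. (z + t * (M div p)) mod M"
  show "int (p ^ n) dvd int a - int a'"
    if "a \<in> Sig M A B (fiber z)" "a' \<in> Sig M A B (fiber z)" for a a'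
    using assms that unfolding aligned_def by blast
  fix b b' assume "b \<in> Sig M B A (fiber z)" "b' \<in> Sig M B A (fiber z)" "b \<noteq> b'"
  then obtain t t' where t: "t < p" "t' < p" "b = b_of (?w t)" "b' = b_of (?w t')"
    unfolding Sig_fiber_eq by auto
  with \<open>b \<noteq> b'\<close> have "t \<noteq> t'"
    by auto
  moreover have "int (p ^ n) dvd int (a_of (?w t)) - int (a_of (?w t'))"
    using assms t(1,2) unfolding aligned_fiber_iff by blast
  ultimately show "int (p ^ (n - 1)) dvd int b - int b'" "\<not> int (p ^ n) dvd int b - int b'"
    using fiber_point_parity[of t t' z] t by simp_all
qed

sublocale swap: prime_power_tiling M B A p n R
  using tiling_commute[OF tiling] prime n_pos M_eq not_dvd_R by unfold_locales

lemma fiber_splits: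
  "if A_aligned z then splits M A B p n (fiber z) else splits M B A p n (fiber z)"
  using splits_if_aligned swap.splits_if_aligned fiber_aligned_A_or_B by auto

lemma aligned_iff_fiber_pair:
  fixes z t1 t2 :: nat
  assumes t: "t1 < p" "t2 < p" "t1 \<noteq> t2"
  defines "w1 \<equiv> (z + t1 * (M div p)) mod M" and "w2 \<equiv> (z + t2 * (M div p)) mod M"
  shows "A_aligned z \<longleftrightarrow> int (p ^ n) dvd int (a_of w1) - int (a_of w2)"
proof
  assume "A_aligned z"
  then show "int (p ^ n) dvd int (a_of w1) - int (a_of w2)"
    using t unfolding aligned_fiber_iff w1_def w2_def by blast
next
  assume A_pair: "int (p ^ n) dvd int (a_of w1) - int (a_of w2)"
  show "A_aligned z"
  proof (rule ccontr)
    assume "\<not> ?thesis"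
    then have "aligned (p ^ n) (Sig M B A (fiber z))"
      using fiber_aligned_A_or_B by blast
    then have "int (p ^ n) dvd int (b_of w1) - int (b_of w2)"
      using t unfolding aligned_fiber_iff w1_def w2_def by blast
    then show False
      using A_pair fiber_point_parity[OF t, of z] unfolding w1_def w2_def by simp
  qed
qed

end

section \<open>Parity on the grid \<open>\<Lambda>(z\<^sub>0, D)\<close>\<close>

lemma fibered_add_M_div_mem:
  assumes "fibered M (A \<inter> Lam M a D) p" "a \<in> A" "a < M" "p > 1"
  shows "(a + M div p) mod M \<in> A"
proof -
  have "a \<in> A \<inter> Lam M a D"
    using assms(2,3) by (simp add: Lam_def)
  then have "tr M a (fib M p) \<subseteq> A \<inter> Lam M a D"
    using assms(1) unfolding fibered_def by blast
  moreover have "(a + M div p) mod M \<in> tr M a (fib M p)"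
    unfolding tr_def fib_def using assms(4) by force
  ultimately show ?thesis
    by blast
qed

lemma int_dvd_mod_add_iff:
  fixes q M e a a' :: nat
  assumes "q dvd M" "q dvd e"
  shows "int q dvd int ((a + e) mod M) - int ((a' + e) mod M) \<longleftrightarrow> int q dvd int a - int a'"
proof -
  define Y where "Y = (int ((a + e) mod M) - int (a + e)) - (int ((a' + e) mod M) - int (a' + e))"
  have "int ((a + e) mod M) - int ((a' + e) mod M) = Y + (int a - int a')"
    by (simp add: Y_def)
  moreover have "int q dvd Y"
    unfolding Y_def using assms(1) by (intro dvd_diff int_dvd_mod_diff)
  ultimately show ?thesis
    using dvd_add_right_iff by simp
qed

lemma int_dvd_mult_sub_mod_mult:
  fixes C :: int and p e M :: nat
  assumes "p * e = M"
  shows "int M dvd C * int e - (C mod int p) * int e"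
proof -
  have pe: "int p * int e = int M"
    using assms by (simp flip: of_nat_mult)
  have "C * int e - (C mod int p) * int e = (C - C mod int p) * int e"
    by (simp add: left_diff_distrib)
  also have "\<dots> = (C div int p) * int M"
    by (simp add: minus_mod_eq_div_mult mult.assoc pe)
  finally have "C * int e - (C mod int p) * int e = (C div int p) * int M" .
  then show ?thesis
    by simp
qed

lemma pairwise_coprime_bezout:
  fixes a b c :: nat
  assumes "coprime a b" "coprime a c" "coprime b c"
  shows "\<exists>u v w :: int. u * int (b * c) + v * int (a * c) + w * int (a * b) = 1"
proof -
  have "gcd (b * c) (a * c) = c"
    using assms(1) by (simp add: gcd_mult_right coprime_iff_gcd_eq_1 gcd.commute mult.commute)
  then obtain u1 v1 :: int where uv1: "u1 * int (b * c) + v1 * int (a * c) = int c"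
    using bezout_int[of "int (b * c)" "int (a * c)"] by (metis gcd_int_int_eq)
  have "coprime c (a * b)"
    using assms(2,3) by (simp add: coprime_commute)
  then obtain u2 v2 :: int where uv2: "u2 * int c + v2 * int (a * b) = 1"
    using bezout_int[of "int c" "int (a * b)"] by (metis coprime_iff_gcd_eq_1 gcd_int_int_eq coprime_int_iff)
  have "(u2 * u1) * int (b * c) + (u2 * v1) * int (a * c) + v2 * int (a * b) =
      u2 * (u1 * int (b * c) + v1 * int (a * c)) + v2 * int (a * b)"
    by (simp add: algebra_simps)
  also have "\<dots> = 1"
    using uv1 uv2 by simp
  finally have "(u2 * u1) * int (b * c) + (u2 * v1) * int (a * c) + v2 * int (a * b) = 1" .
  then show ?thesis
    by blast
qed

locale fibered_grid =
  fixes pi pj pk ni nj nk M z0 :: nat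
    and A B :: "nat set"
    and kappa :: "nat \<Rightarrow> nat"
    and lam :: "nat \<Rightarrow> nat"
  assumes primes: "prime pi" "prime pj" "prime pk"
    and distinct: "pi \<noteq> pj" "pj \<noteq> pk" "pi \<noteq> pk"
    and exps: "ni \<ge> 1" "nj \<ge> 1" "nk \<ge> 1"
    and M_factors: "M = pi ^ ni * pj ^ nj * pk ^ nk"
    and tiles: "tiling M A B"
    and kappa_dir: "\<forall>a\<in>A. kappa a \<in> {pi, pj, pk} \<and>
          fibered M (A \<inter> Lam M a (M div (pi * pj * pk))) (kappa a)"
    and lam_kappa: "\<forall>\<nu><pk. \<forall>a\<in>Sig M A B
          (sumset M (tr M ((z0 + \<nu> * (M div pk)) mod M) (fib M pi)) (fib M pj)).
          kappa a = lam \<nu>"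
    and lam_count: "\<forall>l\<in>{pi, pj}. card {\<nu>. \<nu> < pk \<and> lam \<nu> = l} \<ge> 2"
begin

sublocale prime_power_tiling M A B pk nk "pi ^ ni * pj ^ nj"
proof
  show "tiling M A B" "prime pk" "nk \<ge> 1" "M = pi ^ ni * pj ^ nj * pk ^ nk"
    using primes(3) exps(3) M_factors tiles by simp_all
  have "\<not> pk dvd pi" "\<not> pk dvd pj"
    using primes distinct primes_dvd_imp_eq by blast+
  then show "\<not> pk dvd pi ^ ni * pj ^ nj"
    using primes(3) by (metis prime_dvd_mult_iff prime_dvd_power)
qed

definition grid_point :: "nat \<Rightarrow> nat \<Rightarrow> nat \<Rightarrow> nat" where
  "grid_point x y v = (z0 + x * (M div pi) + y * (M div pj) + v * (M div pk)) mod M"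

lemma prime_power_eq_mult_pred:
  "pi ^ ni = pi * pi ^ (ni - 1)" "pj ^ nj = pj * pj ^ (nj - 1)" "pk ^ nk = pk * pk ^ (nk - 1)"
  using exps by (simp_all add: power_minus_mult[symmetric] mult.commute)

lemma M_div_eq:
  "M div pi = pi ^ (ni - 1) * pj ^ nj * pk ^ nk"
  "M div pj = pi ^ ni * pj ^ (nj - 1) * pk ^ nk"
  "M div pk = pi ^ ni * pj ^ nj * pk ^ (nk - 1)"
  "M div (pi * pj * pk) = pi ^ (ni - 1) * pj ^ (nj - 1) * pk ^ (nk - 1)"
  unfolding M_factors
  by (subst (1) prime_power_eq_mult_pred; use primes prime_gt_0_nat in simp)+

lemma mult_M_div_eq: "pi * (M div pi) = M" "pj * (M div pj) = M" "pk * (M div pk) = M"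
  unfolding M_div_eq by (simp_all add: M_factors prime_power_eq_mult_pred ac_simps)

lemma M_div_eq_mult_D:
  "M div pi = M div (pi * pj * pk) * (pj * pk)"
  "M div pj = M div (pi * pj * pk) * (pi * pk)"
  "M div pk = M div (pi * pj * pk) * (pi * pj)"
  unfolding M_div_eq by (simp_all add: prime_power_eq_mult_pred ac_simps)

lemma prime_power_k_dvd_M_div: "pk ^ nk dvd M div pi" "pk ^ nk dvd M div pj"
  unfolding M_div_eq by simp_all

lemma grid_coefficients:
  assumes "z \<in> Lam M z0 (M div (pi * pj * pk))"
  obtains C1 C2 C3 :: int
  where "int z = int z0 + C1 * int (M div pi) + C2 * int (M div pj) + C3 * int (M div pk)"
proof -
  obtain u v w :: int where uvw: "u * int (pj * pk) + v * int (pi * pk) + w * int (pi * pj) = 1"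
    using pairwise_coprime_bezout[of pi pj pk] primes distinct by (metis primes_coprime)
  obtain t where t: "int z0 - int z = int (M div (pi * pj * pk)) * t"
    using assms unfolding Lam_def by (auto elim: dvdE)
  have "int z = int z0 - int (M div (pi * pj * pk)) * t *
      (u * int (pj * pk) + v * int (pi * pk) + w * int (pi * pj))"
    using t uvw by simp
  also have "\<dots> = int z0 + (- t * u) * int (M div pi) + (- t * v) * int (M div pj)
      + (- t * w) * int (M div pk)"
    unfolding M_div_eq_mult_D by (simp add: algebra_simps)
  finally show ?thesis
    using that by blast
qed

lemma grid_point_cover:
  assumes "z \<in> Lam M z0 (M div (pi * pj * pk))"
  shows "\<exists>x<pi. \<exists>y<pj. \<exists>v<pk. z = grid_point x y v"
proof -
  obtain C1 C2 C3 :: int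
    where z: "int z = int z0 + C1 * int (M div pi) + C2 * int (M div pj) + C3 * int (M div pk)"
    using grid_coefficients[OF assms] .
  define x y v where "x = nat (C1 mod int pi)" "y = nat (C2 mod int pj)" "v = nat (C3 mod int pk)"
  have xyv: "int x = C1 mod int pi" "int y = C2 mod int pj" "int v = C3 mod int pk"
    "x < pi" "y < pj" "v < pk"
    using primes by (simp_all add: x_y_v_def prime_gt_0_nat nat_less_iff)
  have "int z - int (z0 + x * (M div pi) + y * (M div pj) + v * (M div pk)) =
      (C1 * int (M div pi) - (C1 mod int pi) * int (M div pi))
      + (C2 * int (M div pj) - (C2 mod int pj) * int (M div pj))
      + (C3 * int (M div pk) - (C3 mod int pk) * int (M div pk))"
    unfolding z by (simp add: xyv(1-3))
  then have "int M dvd int z - int (z0 + x * (M div pi) + y * (M div pj) + v * (M div pk))"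
    by (simp only:) (intro dvd_add int_dvd_mult_sub_mod_mult mult_M_div_eq)
  then have "int (z mod M) = int ((z0 + x * (M div pi) + y * (M div pj) + v * (M div pk)) mod M)"
    by (simp add: zmod_int mod_eq_dvd_iff)
  moreover have "z < M"
    using assms by (simp add: Lam_def)
  ultimately have "z = grid_point x y v"
    unfolding grid_point_def by simp
  with xyv(4-6) show ?thesis
    by blast
qed

lemma grid_point_lt: "grid_point x y v < M"
  using M_pos by (simp add: grid_point_def)

lemma grid_point_mod: "grid_point x y v = grid_point x y (v mod pk)"
proof -
  have "v * (M div pk) = v mod pk * (M div pk) + v div pk * M"
    using mult_M_div_eq(3) div_mult_mod_eq[of v pk] by (metis add.commute distrib_right mult.assoc)
  then show ?thesis
    unfolding grid_point_def by (simp add: add.assoc[symmetric])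
qed

lemma grid_point_fiber_step:
  "(grid_point x y m + t * (M div pk)) mod M = grid_point x y ((m + t) mod pk)"
proof -
  have "(grid_point x y m + t * (M div pk)) mod M =
      (z0 + x * (M div pi) + y * (M div pj) + m * (M div pk) + t * (M div pk)) mod M"
    unfolding grid_point_def by (rule mod_add_left_eq)
  also have "\<dots> = grid_point x y (m + t)"
    unfolding grid_point_def by (simp add: add_mult_distrib add.assoc)
  finally have "(grid_point x y m + t * (M div pk)) mod M = grid_point x y (m + t)" .
  then show ?thesis
    by (simp flip: grid_point_mod)
qed

lemma grid_point_Suc:
  "grid_point (Suc x) y v = (grid_point x y v + M div pi) mod M"
  "grid_point x (Suc y) v = (grid_point x y v + M div pj) mod M"
  unfolding grid_point_def mod_add_left_eq by (simp_all add: ac_simps)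

lemma grid_point_in_plane:
  assumes "x < pi" "y < pj"
  shows "grid_point x y v \<in> sumset M (tr M ((z0 + v * (M div pk)) mod M) (fib M pi)) (fib M pj)"
proof -
  have "grid_point x y v = (((z0 + v * (M div pk)) mod M + x * (M div pi)) mod M + y * (M div pj)) mod M"
    unfolding grid_point_def mod_add_left_eq by (simp add: ac_simps)
  moreover have "((z0 + v * (M div pk)) mod M + x * (M div pi)) mod M \<in>
      tr M ((z0 + v * (M div pk)) mod M) (fib M pi)"
    unfolding tr_def fib_def using assms(1) by blast
  moreover have "y * (M div pj) \<in> fib M pj"
    unfolding fib_def using assms(2) by blast
  ultimately show ?thesis
    unfolding sumset_def by blast
qed

lemma kappa_a_of_grid_point:
  assumes "x < pi" "y < pj" "v < pk"
  shows "kappa (a_of (grid_point x y v)) = lam v"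
proof -
  have "(a_of (grid_point x y v) + b_of (grid_point x y v)) mod M \<in>
      sumset M (tr M ((z0 + v * (M div pk)) mod M) (fib M pi)) (fib M pj)"
    using decomp_spec(3)[OF grid_point_lt] grid_point_in_plane[OF assms(1,2)] by simp
  then have "a_of (grid_point x y v) \<in>
      Sig M A B (sumset M (tr M ((z0 + v * (M div pk)) mod M) (fib M pi)) (fib M pj))"
    unfolding Sig_def using decomp_spec(1,2)[OF grid_point_lt] by blast
  then show ?thesis
    using lam_kappa assms(3) by blast
qed

lemma a_of_grid_point_shift:
  assumes "x < pi" "y < pj" "v < pk"
  shows "a_of ((grid_point x y v + M div lam v) mod M) = (a_of (grid_point x y v) + M div lam v) mod M"
proof -
  let ?a = "a_of (grid_point x y v)"
  have "?a \<in> A"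
    by (rule decomp_spec(1)[OF grid_point_lt])
  then have "?a < M"
    using tiles unfolding tiling_def by auto
  moreover have "kappa ?a = lam v"
    using kappa_a_of_grid_point[OF assms] .
  moreover have "kappa ?a \<in> {pi, pj, pk}" "fibered M (A \<inter> Lam M ?a (M div (pi * pj * pk))) (kappa ?a)"
    using kappa_dir \<open>?a \<in> A\<close> by auto
  ultimately have "(?a + M div lam v) mod M \<in> A"
    using fibered_add_M_div_mem[of M A ?a _ "lam v"] \<open>?a \<in> A\<close> primes prime_gt_1_nat by auto
  then show ?thesis
    using decomp_shift(1)[OF grid_point_lt] by blast
qed

lemma two_planes_in_direction:
  assumes "l \<in> {pi, pj}"
  obtains v1 v2 where "v1 < pk" "v2 < pk" "v1 \<noteq> v2" "lam v1 = l" "lam v2 = l"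
proof -
  have "\<not> card {\<nu>. \<nu> < pk \<and> lam \<nu> = l} \<le> Suc 0"
    using lam_count assms by force
  then have "\<not> (\<forall>v1\<in>{\<nu>. \<nu> < pk \<and> lam \<nu> = l}. \<forall>v2\<in>{\<nu>. \<nu> < pk \<and> lam \<nu> = l}. v1 = v2)"
    by (subst card_le_Suc0_iff_eq[symmetric]) simp_all
  then show ?thesis
    using that by blast
qed

lemma aligned_grid_point_iff:
  assumes "m < pk" "v1 < pk" "v2 < pk" "v1 \<noteq> v2"
  shows "A_aligned (grid_point x y m) \<longleftrightarrow>
    int (pk ^ nk) dvd int (a_of (grid_point x y v1)) - int (a_of (grid_point x y v2))"
proof -
  define t1 t2 where "t1 = (v1 + pk - m) mod pk" "t2 = (v2 + pk - m) mod pk"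
  have "(m + t1) mod pk = v1" "(m + t2) mod pk = v2"
    using assms(1-3) by (simp_all add: t1_t2_def mod_add_right_eq)
  then have "(grid_point x y m + t1 * (M div pk)) mod M = grid_point x y v1"
    "(grid_point x y m + t2 * (M div pk)) mod M = grid_point x y v2"
    by (simp_all add: grid_point_fiber_step)
  moreover have "t1 < pk" "t2 < pk" "t1 \<noteq> t2"
    using assms(1,4) \<open>(m + t1) mod pk = v1\<close> \<open>(m + t2) mod pk = v2\<close> by (auto simp: t1_t2_def)
  ultimately show ?thesis
    using aligned_iff_fiber_pair[of t1 t2 "grid_point x y m"] by simp
qed

lemma aligned_grid_point_shift:
  assumes "x < pi" "y < pj" "m < pk" "l \<in> {pi, pj}"
    and shift: "\<And>v. grid_point x' y' v = (grid_point x y v + M div l) mod M"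
  shows "A_aligned (grid_point x' y' m) \<longleftrightarrow> A_aligned (grid_point x y m)"
proof -
  obtain v1 v2 where v: "v1 < pk" "v2 < pk" "v1 \<noteq> v2" "lam v1 = l" "lam v2 = l"
    using two_planes_in_direction[OF assms(4)] .
  have shifted: "a_of (grid_point x' y' v) = (a_of (grid_point x y v) + M div l) mod M"
    if "v < pk" "lam v = l" for v
    using a_of_grid_point_shift[OF assms(1,2) that(1)] that(2) by (simp add: shift)
  have "pk ^ nk dvd M" "pk ^ nk dvd M div l"
    using assms(4) prime_power_k_dvd_M_div by (auto simp: M_factors)
  then show ?thesis
    unfolding aligned_grid_point_iff[OF assms(3) v(1-3)] shifted[OF v(1,4)] shifted[OF v(2,5)]
    by (rule int_dvd_mod_add_iff)
qed

lemma aligned_grid_point_iff_origin: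
  assumes "x < pi" "y < pj" "m < pk"
  shows "A_aligned (grid_point x y m) \<longleftrightarrow> A_aligned (grid_point 0 0 0)"
proof -
  have pk: "1 < pk"
    using prime_gt_1_nat[OF primes(3)] by simp
  have "A_aligned (grid_point x y m) \<longleftrightarrow> A_aligned (grid_point 0 y m)"
    using assms(1)
  proof (induction x)
    case (Suc x)
    then show ?case
      using aligned_grid_point_shift[of x y m pi "Suc x" y] assms(2,3) grid_point_Suc(1) by simp
  qed simp
  also have "\<dots> \<longleftrightarrow> A_aligned (grid_point 0 0 m)"
    using assms(2)
  proof (induction y)
    case (Suc y)
    then show ?case
      using aligned_grid_point_shift[of 0 y m pj 0 "Suc y"] assms(3) primes(1) prime_gt_0_nat
        grid_point_Suc(2) by simp
  qed simp
  also have "\<dots> \<longleftrightarrow> A_aligned (grid_point 0 0 0)"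
    using aligned_grid_point_iff[OF assms(3), of 0 1] aligned_grid_point_iff[of 0 0 1] pk by simp
  finally show ?thesis .
qed

theorem grid_fibers_split_same_parity:
  "(\<forall>z\<in>Lam M z0 (M div (pi * pj * pk)). splits M A B pk nk (fiber z)) \<or>
   (\<forall>z\<in>Lam M z0 (M div (pi * pj * pk)). splits M B A pk nk (fiber z))"
proof -
  have "A_aligned z \<longleftrightarrow> A_aligned (grid_point 0 0 0)"
    if "z \<in> Lam M z0 (M div (pi * pj * pk))" for z
    using grid_point_cover[OF that] aligned_grid_point_iff_origin by blast
  then show ?thesis
    using fiber_splits by metis
qed

end

theorem lemma7p6:
  fixes pi pj pk ni nj nk M z0 :: nat
    and A B :: "nat set"
    and kappa :: "nat \<Rightarrow> nat"
    and lam :: "nat \<Rightarrow> nat"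
  assumes primes: "prime pi" "prime pj" "prime pk"
    and distinct: "pi \<noteq> pj" "pj \<noteq> pk" "pi \<noteq> pk"
    and exps: "ni \<ge> 1" "nj \<ge> 1" "nk \<ge> 1"
    and M_def: "M = pi ^ ni * pj ^ nj * pk ^ nk"
    and tile: "tiling M A B"
    and cyc: "cyclotomic M dvd mask_poly A"
    and fibered_grids: "\<forall>a\<in>A. \<exists>p\<in>{pi, pj, pk}.
          fibered M (A \<inter> Lam M a (M div (pi * pj * pk))) p"
    and kappa_dir: "\<forall>a\<in>A. kappa a \<in> {pi, pj, pk} \<and>
          fibered M (A \<inter> Lam M a (M div (pi * pj * pk))) (kappa a)"
    and kappa_grid: "\<forall>a\<in>A. \<forall>a'\<in>A \<inter> Lam M a (M div (pi * pj * pk)). kappa a' = kappa a"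
    and z0: "z0 < M"
    and kappa_ij: "\<forall>a\<in>Sig M A B (Lam M z0 (M div (pi * pj * pk))). kappa a \<in> {pi, pj}"
    and lam_ij: "\<forall>\<nu><pk. lam \<nu> \<in> {pi, pj}"
    and lam_kappa: "\<forall>\<nu><pk. \<forall>a\<in>Sig M A B
          (sumset M (tr M ((z0 + \<nu> * (M div pk)) mod M) (fib M pi)) (fib M pj)).
          kappa a = lam \<nu>"
    and count: "\<forall>l\<in>{pi, pj}. card {\<nu>. \<nu> < pk \<and> lam \<nu> = l} \<ge> 2"
  shows "(\<forall>z\<in>Lam M z0 (M div (pi * pj * pk)). splits M A B pk nk (tr M z (fib M pk))) \<or>
         (\<forall>z\<in>Lam M z0 (M div (pi * pj * pk)). splits M B A pk nk (tr M z (fib M pk)))"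
proof -
  interpret fibered_grid pi pj pk ni nj nk M z0 A B kappa lam
    using primes distinct exps M_def tile kappa_dir lam_kappa count by unfold_locales
  show ?thesis
    by (rule grid_fibers_split_same_parity)
qed

end
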